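(* Let $B\ge1$, $h\ge2$ be integers and $\Delta\ge 2$ an even integer. (1) There is a network (graph of maximum degree at most $\Delta$) with $\Theta(\Delta^h)$ nodes, together with an instance of the $B$-bit $h$-hop simulation problem on it, such that any (possibly randomized) Beeping Network algorithm that terminates within $\frac12 B(\Delta-1)^{h-2}(\Delta/2)^3$ rounds outputs the correct result with probability at most $2^{-\frac12 B(\Delta-1)^{h-2}(\Delta/2)^3}=2^{-\Theta(B\Delta^{h+1})}$; in particular, any $B$-bit $h$-hop simulation algorithm requires $\Omega(B\Delta^{h+1})$ beeping rounds to succeed with probability more than $2^{-\frac12 B(\Delta-1)^{h-2}(\Delta/2)^3}$. (2) There is a network of maximum degree at most $\Delta$ with $\Theta(\Delta^h)$ nodes, together with an instance of $B$-bit $h$-hop Local Broadcast on it, such that any (possibly randomized) algorithm that terminates within $\frac12 B(\Delta-1)^{h-2}(\Delta/2)^2$ rounds succeeds with probability at most $2^{-\frac12 B(\Delta-1)^{h-2}(\Delta/2)^2}=2^{-\Theta(B\Delta^{h})}$; in particular, any $B$-bit $h$-hop Local Broadcast algorithm requires $\Omega(B\Delta^{h})$ beeping rounds to succeed with probability more than that.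
   Context: A Beeping Network is a network of $n$ nodes with unique IDs whose topology is an undirected graph $G=(V,E)$. Time is divided into synchronous rounds and all nodes start simultaneously. In each round every node either beeps or listens; a listening node hears "silence" if no neighbor beeps and "noise" if at least one neighbor beeps, and cannot distinguish one beep from several. Nodes may use private randomness. $B$-bit $h$-hop simulation: each node holds messages (possibly different for different destinations) of at most $B$ bits addressed to other nodes, and must deliver each such message to its destination whenever the destination is within distance $h$ (hops) of the source. $B$-bit $h$-hop Local Broadcast: each node holds a single message of at most $B$ bits that must be delivered to all nodes within distance $h$ of it. *)

theory Defs
  imports "HOL-Probability.Product_PMF"
begin

definition network :: "nat set \<Rightarrow> (nat \<Rightarrow> nat \<Rightarrow> bool) \<Rightarrow> bool" where
  "network V E \<longleftrightarrow> finite V \<and> (\<forall>u w. E u w \<longrightarrow> u \<in> V \<and> w \<in> V \<and> u \<noteq> w \<and> E w u)"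

definition max_degree_le :: "nat set \<Rightarrow> (nat \<Rightarrow> nat \<Rightarrow> bool) \<Rightarrow> nat \<Rightarrow> bool" where
  "max_degree_le V E D \<longleftrightarrow> (\<forall>v\<in>V. card {u\<in>V. E v u} \<le> D)"

definition within_dist :: "(nat \<Rightarrow> nat \<Rightarrow> bool) \<Rightarrow> nat \<Rightarrow> nat \<Rightarrow> nat \<Rightarrow> bool" where
  "within_dist E k u w \<longleftrightarrow> (\<exists>j\<le>k. (u, w) \<in> {(a, b). E a b} ^^ j)"

text \<open>Node v draws a private random seed from coins v (independently
  of the other nodes); in every round it beeps or listens as a function of its
  ID, its input, its seed and its history of observations; after the last round
  it produces its output from the same data.\<close>
record ('i, 'o) beep_alg =
  coins :: "nat \<Rightarrow> nat pmf"
  act   :: "nat \<Rightarrow> 'i \<Rightarrow> nat \<Rightarrow> bool list \<Rightarrow> bool"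
  outp  :: "nat \<Rightarrow> 'i \<Rightarrow> nat \<Rightarrow> bool list \<Rightarrow> 'o"

text \<open>A listening node hears noise iff some neighbour beeps;
  a beeping node hears nothing (recorded as False).\<close>
fun hist :: "nat set \<Rightarrow> (nat \<Rightarrow> nat \<Rightarrow> bool) \<Rightarrow> (nat \<Rightarrow> bool list \<Rightarrow> bool)
             \<Rightarrow> nat \<Rightarrow> nat \<Rightarrow> bool list" where
  "hist V E b 0 v = []"
| "hist V E b (Suc t) v = hist V E b t v @
     [\<not> b v (hist V E b t v) \<and> (\<exists>u\<in>V. E v u \<and> b u (hist V E b t u))]"

definition outcome :: "('i, 'o) beep_alg \<Rightarrow> nat set \<Rightarrow> (nat \<Rightarrow> nat \<Rightarrow> bool)
     \<Rightarrow> (nat \<Rightarrow> 'i) \<Rightarrow> nat \<Rightarrow> (nat \<Rightarrow> nat) \<Rightarrow> nat \<Rightarrow> 'o" where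
  "outcome A V E inp T \<sigma> v =
     outp A v (inp v) (\<sigma> v) (hist V E (\<lambda>u hs. act A u (inp u) (\<sigma> u) hs) T v)"

definition success_prob :: "('i, 'o) beep_alg \<Rightarrow> nat set \<Rightarrow> (nat \<Rightarrow> nat \<Rightarrow> bool)
     \<Rightarrow> (nat \<Rightarrow> 'i) \<Rightarrow> nat \<Rightarrow> ((nat \<Rightarrow> 'o) \<Rightarrow> bool) \<Rightarrow> real" where
  "success_prob A V E inp T ok =
     measure_pmf.prob (Pi_pmf V 0 (coins A)) {\<sigma>. ok (outcome A V E inp T \<sigma>)}"

text \<open>Node u's input: its messages indexed by destination.\<close>
definition sim_pairs_ok :: "nat set \<Rightarrow> (nat \<Rightarrow> nat \<Rightarrow> bool) \<Rightarrow> nat \<Rightarrow> (nat \<times> nat) set \<Rightarrow> bool" where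
  "sim_pairs_ok V E h P \<longleftrightarrow>
     (\<forall>(u, w)\<in>P. u \<in> V \<and> w \<in> V \<and> u \<noteq> w \<and> within_dist E h u w)"

definition sim_input :: "(nat \<times> nat) set \<Rightarrow> (nat \<Rightarrow> nat \<Rightarrow> bool list) \<Rightarrow> nat \<Rightarrow> nat \<Rightarrow> bool list" where
  "sim_input P m u = (\<lambda>w. if (u, w) \<in> P then m u w else [])"

definition sim_correct :: "(nat \<times> nat) set \<Rightarrow> (nat \<Rightarrow> nat \<Rightarrow> bool list)
     \<Rightarrow> (nat \<Rightarrow> nat \<Rightarrow> bool list) \<Rightarrow> bool" where
  "sim_correct P m out \<longleftrightarrow> (\<forall>(u, w)\<in>P. out w u = m u w)"

definition lb_correct :: "nat set \<Rightarrow> (nat \<Rightarrow> nat \<Rightarrow> bool) \<Rightarrow> nat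
     \<Rightarrow> (nat \<Rightarrow> bool list) \<Rightarrow> (nat \<Rightarrow> nat \<Rightarrow> bool list) \<Rightarrow> bool" where
  "lb_correct V E h m out \<longleftrightarrow>
     (\<forall>u\<in>V. \<forall>w\<in>V. u \<noteq> w \<and> within_dist E h u w \<longrightarrow> out w u = m u)"

end

theory Submission
  imports Defs
begin

(* Take d = D/2 sinks joined completely to d hubs, and hang below every hub a tree of depth h - 1
   in which the hub has d children and every deeper inner node D - 1 children. All degrees are
   at most D, there are Theta(D^h) nodes, and each of the d^2 (D - 1)^(h - 2) leaves is within h
   hops of every sink. The sinks are adjacent to the hubs only, so in each round all they learn
   is one bit: whether some hub beeps. For fixed random seeds their outputs therefore take at most
   2^T values after T rounds, while a correct output at the sinks determines all N message bits
   the leaves have to deliver to them. So at most 2^T of the 2^N message assignments are answered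
   correctly for any fixed seeds, and averaging over the assignments, one of them succeeds with
   probability at most 2^(T - N). *)

section \<open>The one-bit-per-round bottleneck\<close>

definition beep_in :: "nat set \<Rightarrow> (nat \<Rightarrow> nat \<Rightarrow> bool) \<Rightarrow> (nat \<Rightarrow> bool list \<Rightarrow> bool)
     \<Rightarrow> nat set \<Rightarrow> nat \<Rightarrow> bool" where
  "beep_in V E b S t \<longleftrightarrow> (\<exists>u\<in>S. b u (hist V E b t u))"

lemma hist_eq_if_beep_in_eq:
  assumes nbr: "\<forall>y\<in>Y. \<forall>u\<in>V. E y u \<longleftrightarrow> u \<in> S" and "S \<subseteq> V"
    and same_act: "\<forall>y\<in>Y. b y = b' y"
    and same_signal: "\<forall>t<T. beep_in V E b S t = beep_in V E b' S t"
    and "t \<le> T" and "y \<in> Y"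
  shows "hist V E b t y = hist V E b' t y"
  using \<open>t \<le> T\<close>
proof (induction t)
  case 0
  then show ?case by simp
next
  case (Suc t)
  have "(\<exists>u\<in>V. E y u \<and> c u (hist V E c t u)) = beep_in V E c S t" for c
    using nbr \<open>y \<in> Y\<close> \<open>S \<subseteq> V\<close> by (auto simp: beep_in_def)
  then show ?case
    using Suc same_act same_signal \<open>y \<in> Y\<close> by simp
qed

lemma card_correct_inputs_le:
  fixes A :: "('i, 'o) beep_alg" and inp :: "'g \<Rightarrow> nat \<Rightarrow> 'i"
    and ok :: "'g \<Rightarrow> (nat \<Rightarrow> 'o) \<Rightarrow> bool"
  assumes nbr: "\<forall>y\<in>Y. \<forall>u\<in>V. E y u \<longleftrightarrow> u \<in> S" and SV: "S \<subseteq> V"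
    and same_input: "\<forall>g\<in>G. \<forall>g'\<in>G. \<forall>y\<in>Y. inp g y = inp g' y"
    and determined: "\<forall>g\<in>G. \<forall>g'\<in>G. \<forall>out out'.
       ok g out \<longrightarrow> ok g' out' \<longrightarrow> (\<forall>y\<in>Y. out y = out' y) \<longrightarrow> g = g'"
  shows "card {g\<in>G. ok g (outcome A V E (inp g) T \<sigma>)} \<le> 2 ^ T"
proof -
  define b where "b g = (\<lambda>u hs. act A u (inp g u) (\<sigma> u) hs)" for g
  define signal where "signal g = map (beep_in V E (b g) S) [0..<T]" for g
  (* the outputs at Y depend on the inputs only through the T-bit signal from S *)
  have "inj_on signal {g\<in>G. ok g (outcome A V E (inp g) T \<sigma>)}"
  proof (rule inj_onI)
    fix g g' assume g: "g \<in> {g\<in>G. ok g (outcome A V E (inp g) T \<sigma>)}"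
      and g': "g' \<in> {g\<in>G. ok g (outcome A V E (inp g) T \<sigma>)}"
      and same_signal: "signal g = signal g'"
    have same_inp: "\<forall>y\<in>Y. inp g y = inp g' y"
      using same_input g g' by blast
    have "\<forall>t<T. beep_in V E (b g) S t = beep_in V E (b g') S t"
    proof (intro allI impI)
      fix t assume "t < T"
      then show "beep_in V E (b g) S t = beep_in V E (b g') S t"
        using arg_cong[OF same_signal, of "\<lambda>xs. xs ! t"] by (simp add: signal_def)
    qed
    moreover have "\<forall>y\<in>Y. b g y = b g' y"
      using same_inp by (simp add: b_def)
    ultimately have "hist V E (b g) T y = hist V E (b g') T y" if "y \<in> Y" for y
      using hist_eq_if_beep_in_eq[OF nbr SV] that by blast
    then have "\<forall>y\<in>Y. outcome A V E (inp g) T \<sigma> y = outcome A V E (inp g') T \<sigma> y"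
      using same_inp by (simp add: outcome_def b_def)
    then show "g = g'"
      using determined g g' by blast
  qed
  moreover have "signal ` {g\<in>G. ok g (outcome A V E (inp g) T \<sigma>)} \<subseteq> {xs. length xs = T}"
    by (auto simp: signal_def)
  ultimately have "card {g\<in>G. ok g (outcome A V E (inp g) T \<sigma>)} \<le> card {xs :: bool list. length xs = T}"
    using card_inj_on_le finite_lists_length_eq[of "UNIV :: bool set"] by force
  also have "\<dots> = 2 ^ T"
    using card_lists_length_eq[of "UNIV :: bool set"] by simp
  finally show ?thesis .
qed

lemma exists_prob_le_average:
  fixes p :: "'a pmf" and X :: "'g \<Rightarrow> 'a set"
  assumes fin: "finite G" and "G \<noteq> {}" and bound: "\<And>x. card {g\<in>G. x \<in> X g} \<le> M"
  shows "\<exists>g\<in>G. measure_pmf.prob p (X g) \<le> M / card G"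
proof (rule ccontr)
  assume "\<not> ?thesis"
  then have "(\<Sum>g\<in>G. M / card G) < (\<Sum>g\<in>G. measure_pmf.prob p (X g))"
    using assms by (intro sum_strict_mono) (auto simp: not_le)
  also have "\<dots> = measure_pmf.expectation p (\<lambda>x. \<Sum>g\<in>G. indicator (X g) x)"
    by (subst Bochner_Integration.integral_sum)
      (auto intro!: integrable_real_indicator simp: less_top[symmetric])
  also have "\<dots> \<le> M"
  proof (rule measure_pmf.integral_le_const)
    show "integrable (measure_pmf p) (\<lambda>x. \<Sum>g\<in>G. indicator (X g) x :: real)"
      by (auto intro!: integrable_real_indicator simp: less_top[symmetric])
    have "(\<Sum>g\<in>G. indicator (X g) x :: real) = card {g\<in>G. x \<in> X g}" for x
      using fin by (simp add: indicator_def sum.If_cases Int_def)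
    then show "AE x in measure_pmf p. (\<Sum>g\<in>G. indicator (X g) x) \<le> real M"
      using bound by simp
  qed
  finally show False
    using assms by simp
qed

lemma exists_hard_bit_strings:
  fixes A :: "('i, 'o) beep_alg" and inp :: "('k \<Rightarrow> bool list) \<Rightarrow> nat \<Rightarrow> 'i"
    and ok :: "('k \<Rightarrow> bool list) \<Rightarrow> (nat \<Rightarrow> 'o) \<Rightarrow> bool"
    and I :: "'k set" and B :: nat and K :: real
  defines "M \<equiv> PiE I (\<lambda>_. {xs :: bool list. length xs = B})"
  assumes "finite I"
    and nbr: "\<forall>y\<in>Y. \<forall>u\<in>V. E y u \<longleftrightarrow> u \<in> S" and SV: "S \<subseteq> V"
    and same_input: "\<forall>g g'. \<forall>y\<in>Y. inp g y = inp g' y"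
    and determined: "\<forall>g\<in>M. \<forall>g'\<in>M. \<forall>out out'.
       ok g out \<longrightarrow> ok g' out' \<longrightarrow> (\<forall>y\<in>Y. out y = out' y) \<longrightarrow> g = g'"
    and "real T \<le> K / 2" and "K \<le> real (B * card I)"
  shows "\<exists>g\<in>M. success_prob A V E (inp g) T (ok g) \<le> 2 powr (- (K / 2))"
proof -
  have card_M: "card M = 2 ^ (B * card I)"
    using card_lists_length_eq[of "UNIV :: bool set"]
    by (simp add: M_def card_PiE \<open>finite I\<close> power_mult)
  have "finite M"
    using card_M by (intro card_ge_0_finite) simp
  moreover have "M \<noteq> {}"
    by (auto simp: M_def PiE_eq_empty_iff intro: length_replicate)
  moreover have "card {g\<in>M. \<sigma> \<in> {\<sigma>. ok g (outcome A V E (inp g) T \<sigma>)}} \<le> 2 ^ T" for \<sigma>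
    using same_input by (auto intro!: card_correct_inputs_le[OF nbr SV _ determined])
  ultimately have "\<exists>g\<in>M. measure_pmf.prob (Pi_pmf V 0 (coins A))
      {\<sigma>. ok g (outcome A V E (inp g) T \<sigma>)} \<le> real (2 ^ T) / card M"
    by (rule exists_prob_le_average)
  then obtain g where "g \<in> M"
    and "success_prob A V E (inp g) T (ok g) \<le> 2 ^ T / card M"
    by (auto simp: success_prob_def)
  note this(2)
  also have "2 ^ T / card M = 2 powr (real T - real (B * card I))"
    by (simp add: card_M powr_diff flip: powr_realpow of_nat_mult)
  also have "\<dots> \<le> 2 powr (- (K / 2))"
    using assms by (intro powr_mono) auto
  finally show ?thesis
    using \<open>g \<in> M\<close> by blast
qed

section \<open>The lower-bound network\<close>

(* Node addresses: [0, r] for the d sinks and 1 # l # p for the nodes of the tree below the hub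
   [1, l]. By branch_ok the hub has d children and deeper inner nodes 2 d - 1, so every degree is
   at most 2 d; the node IDs are the to_nat codes of the addresses. *)
definition branch_ok :: "nat \<Rightarrow> nat list \<Rightarrow> bool" where
  "branch_ok d p \<longleftrightarrow> p = [] \<or> (hd p < d \<and> (\<forall>c\<in>set (tl p). c < 2 * d - 1))"

definition sink_nodes :: "nat \<Rightarrow> nat list set" where
  "sink_nodes d = {[0, r] | r. r < d}"

definition hub_nodes :: "nat \<Rightarrow> nat list set" where
  "hub_nodes d = {[1, l] | l. l < d}"

definition tree_nodes :: "nat \<Rightarrow> nat \<Rightarrow> nat list set" where
  "tree_nodes d h = {1 # l # p | l p. l < d \<and> length p \<le> h - 1 \<and> branch_ok d p}"

definition leaf_nodes :: "nat \<Rightarrow> nat \<Rightarrow> nat list set" where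
  "leaf_nodes d h = (\<lambda>(l, c, q). 1 # l # c # q) `
     ({..<d} \<times> {..<d} \<times> {q. set q \<subseteq> {..<2 * d - 1} \<and> length q = h - 2})"

definition gadget_nodes :: "nat \<Rightarrow> nat \<Rightarrow> nat list set" where
  "gadget_nodes d h = sink_nodes d \<union> tree_nodes d h"

definition gadget_edge :: "nat \<Rightarrow> nat \<Rightarrow> nat list \<Rightarrow> nat list \<Rightarrow> bool" where
  "gadget_edge d h x y \<longleftrightarrow>
     (x \<in> sink_nodes d \<and> y \<in> hub_nodes d) \<or> (x \<in> hub_nodes d \<and> y \<in> sink_nodes d) \<or>
     (x \<in> tree_nodes d h \<and> y \<in> tree_nodes d h \<and> (\<exists>c. y = x @ [c] \<or> x = y @ [c]))"

definition gadget_V :: "nat \<Rightarrow> nat \<Rightarrow> nat set" where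
  "gadget_V d h = to_nat ` gadget_nodes d h"

definition gadget_E :: "nat \<Rightarrow> nat \<Rightarrow> nat \<Rightarrow> nat \<Rightarrow> bool" where
  "gadget_E d h a b \<longleftrightarrow> (\<exists>x y. a = to_nat x \<and> b = to_nat y \<and> gadget_edge d h x y)"

lemma card_to_nat_image: "card (to_nat ` (A :: nat list set)) = card A"
  by (rule card_image) (meson inj_on_subset inj_to_nat subset_UNIV)

lemma hub_nodes_subset_tree_nodes: "h \<ge> 1 \<Longrightarrow> hub_nodes d \<subseteq> tree_nodes d h"
  by (auto simp: hub_nodes_def tree_nodes_def branch_ok_def)

lemma leaf_nodes_subset_tree_nodes: "h \<ge> 2 \<Longrightarrow> leaf_nodes d h \<subseteq> tree_nodes d h"
  by (auto simp: leaf_nodes_def tree_nodes_def branch_ok_def)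

lemma sink_nodes_disjoint_tree_nodes: "sink_nodes d \<inter> tree_nodes d h = {}"
  by (auto simp: sink_nodes_def tree_nodes_def)

lemma sink_nodes_eq: "sink_nodes d = (\<lambda>r. [0, r]) ` {..<d}"
  by (auto simp: sink_nodes_def)

lemma hub_nodes_eq: "hub_nodes d = (\<lambda>l. [1, l]) ` {..<d}"
  by (auto simp: hub_nodes_def)

lemma finite_sink_nodes: "finite (sink_nodes d)"
  by (simp add: sink_nodes_eq)

lemma card_sink_nodes: "card (sink_nodes d) = d"
  by (simp add: sink_nodes_eq card_image inj_on_def)

lemma card_hub_nodes: "card (hub_nodes d) = d"
  by (simp add: hub_nodes_eq card_image inj_on_def)

lemma card_leaf_nodes: "card (leaf_nodes d h) = d * d * (2 * d - 1) ^ (h - 2)"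
  unfolding leaf_nodes_def
  by (subst card_image) (auto simp: inj_on_def card_cartesian_product card_lists_length_eq)

lemma finite_leaf_nodes: "finite (leaf_nodes d h)"
  by (simp add: leaf_nodes_def finite_lists_length_eq)

lemma tree_nodes_subset_bounded_lists:
  "tree_nodes d h \<subseteq> (\<lambda>(l, p). 1 # l # p) ` ({..<d} \<times> {p. set p \<subseteq> {..<2 * d} \<and> length p \<le> h - 1})"
proof
  fix x assume "x \<in> tree_nodes d h"
  then obtain l p where x: "x = 1 # l # p" "l < d" "length p \<le> h - 1" "branch_ok d p"
    by (auto simp: tree_nodes_def)
  then have "set p \<subseteq> {..<2 * d}"
    by (cases p) (auto simp: branch_ok_def)
  then show "x \<in> (\<lambda>(l, p). 1 # l # p) ` ({..<d} \<times> {p. set p \<subseteq> {..<2 * d} \<and> length p \<le> h - 1})"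
    using x by (auto intro!: image_eqI[where x = "(l, p)"])
qed

lemma finite_tree_nodes: "finite (tree_nodes d h)"
  by (rule finite_subset[OF tree_nodes_subset_bounded_lists]) (auto intro!: finite_lists_length_le)

lemma card_tree_nodes_le:
  assumes "d \<ge> 1" and "h \<ge> 1"
  shows "card (tree_nodes d h) \<le> d * (h * (2 * d) ^ (h - 1))"
proof -
  let ?P = "{p. set p \<subseteq> {..<2 * d} \<and> length p \<le> h - 1}"
  have "card (tree_nodes d h) \<le> card ((\<lambda>(l, p). 1 # l # p) ` ({..<d} \<times> ?P))"
    by (rule card_mono[OF _ tree_nodes_subset_bounded_lists]) (auto intro!: finite_lists_length_le)
  also have "\<dots> \<le> card ({..<d} \<times> ?P)"
    by (rule card_image_le) (auto intro!: finite_lists_length_le)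
  also have "\<dots> = d * (\<Sum>i\<le>h - 1. (2 * d) ^ i)"
    by (simp add: card_cartesian_product card_lists_length_le)
  also have "\<dots> \<le> d * (\<Sum>i\<le>h - 1. (2 * d) ^ (h - 1))"
  proof (intro mult_le_mono2 sum_mono)
    fix i assume "i \<in> {..h - 1}"
    then show "(2 * d) ^ i \<le> (2 * d) ^ (h - 1)"
      using power_increasing[of i "h - 1" "2 * d"] \<open>d \<ge> 1\<close> by simp
  qed
  finally show ?thesis
    using \<open>h \<ge> 1\<close> by simp
qed

lemma gadget_edge_sym: "gadget_edge d h x y \<Longrightarrow> gadget_edge d h y x"
  by (auto simp: gadget_edge_def)

lemma gadget_edge_imp_nodes:
  "h \<ge> 1 \<Longrightarrow> gadget_edge d h x y \<Longrightarrow> x \<in> gadget_nodes d h \<and> y \<in> gadget_nodes d h \<and> x \<noteq> y"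
  using hub_nodes_subset_tree_nodes[of h d]
  by (auto simp: gadget_edge_def gadget_nodes_def sink_nodes_def hub_nodes_def)

lemma sink_neighbours: "x \<in> sink_nodes d \<Longrightarrow> gadget_edge d h x y \<Longrightarrow> y \<in> hub_nodes d"
  by (auto simp: gadget_edge_def sink_nodes_def hub_nodes_def tree_nodes_def)

lemma hub_neighbours:
  "x \<in> hub_nodes d \<Longrightarrow> gadget_edge d h x y \<Longrightarrow> y \<in> sink_nodes d \<or> (\<exists>c<d. y = x @ [c])"
  by (auto simp: gadget_edge_def sink_nodes_def hub_nodes_def tree_nodes_def branch_ok_def)

lemma inner_neighbours:
  "x \<in> tree_nodes d h \<Longrightarrow> x \<notin> hub_nodes d \<Longrightarrow> gadget_edge d h x y \<Longrightarrow>
     y = butlast x \<or> (\<exists>c<2 * d - 1. y = x @ [c])"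
  by (auto simp: gadget_edge_def sink_nodes_def hub_nodes_def tree_nodes_def branch_ok_def)

lemma card_gadget_neighbours_le:
  assumes "d \<ge> 1" and "x \<in> gadget_nodes d h"
  shows "card {y. gadget_edge d h x y} \<le> 2 * d"
proof -
  consider "x \<in> sink_nodes d" | "x \<in> hub_nodes d" | "x \<in> tree_nodes d h" "x \<notin> hub_nodes d"
    using \<open>x \<in> gadget_nodes d h\<close> by (auto simp: gadget_nodes_def)
  then show ?thesis
  proof cases
    case 1
    then have "card {y. gadget_edge d h x y} \<le> card (hub_nodes d)"
      using sink_neighbours by (intro card_mono) (auto simp: hub_nodes_eq)
    then show ?thesis
      by (simp add: card_hub_nodes)
  next
    case 2
    then have "card {y. gadget_edge d h x y} \<le> card (sink_nodes d \<union> (\<lambda>c. x @ [c]) ` {..<d})"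
      by (intro card_mono) (auto simp: sink_nodes_eq dest: hub_neighbours[OF 2])
    also have "\<dots> \<le> card (sink_nodes d) + card ((\<lambda>c. x @ [c]) ` {..<d})"
      by (rule card_Un_le)
    also have "\<dots> \<le> d + d"
      using card_image_le[of "{..<d}" "\<lambda>c. x @ [c]"] by (simp add: card_sink_nodes)
    finally show ?thesis
      by simp
  next
    case 3
    then have "card {y. gadget_edge d h x y} \<le> card (insert (butlast x) ((\<lambda>c. x @ [c]) ` {..<2 * d - 1}))"
      by (intro card_mono) (auto dest: inner_neighbours[OF 3])
    also have "\<dots> \<le> Suc (card ((\<lambda>c. x @ [c]) ` {..<2 * d - 1}))"
      by (rule card_insert_le_m1) auto
    also have "\<dots> \<le> Suc (2 * d - 1)"
      using card_image_le[of "{..<2 * d - 1}" "\<lambda>c. x @ [c]"] by simp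
    finally show ?thesis
      using \<open>d \<ge> 1\<close> by simp
  qed
qed

lemma gadget_neighbours:
  "h \<ge> 1 \<Longrightarrow> {u \<in> gadget_V d h. gadget_E d h (to_nat x) u} = to_nat ` {y. gadget_edge d h x y}"
  using gadget_edge_imp_nodes by (auto simp: gadget_V_def gadget_E_def)

lemma network_gadget:
  assumes "h \<ge> 1"
  shows "network (gadget_V d h) (gadget_E d h)"
proof -
  have "finite (gadget_V d h)"
    by (simp add: gadget_V_def gadget_nodes_def finite_sink_nodes finite_tree_nodes)
  moreover have "u \<in> gadget_V d h \<and> w \<in> gadget_V d h \<and> u \<noteq> w \<and> gadget_E d h w u"
    if "gadget_E d h u w" for u w
    using that gadget_edge_imp_nodes[OF assms] gadget_edge_sym
    by (auto simp: gadget_E_def gadget_V_def)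
  ultimately show ?thesis
    by (simp add: network_def)
qed

lemma max_degree_gadget:
  assumes "d \<ge> 1" and "h \<ge> 1"
  shows "max_degree_le (gadget_V d h) (gadget_E d h) (2 * d)"
  unfolding max_degree_le_def
proof
  fix v assume "v \<in> gadget_V d h"
  then obtain x where x: "v = to_nat x" "x \<in> gadget_nodes d h"
    by (auto simp: gadget_V_def)
  have "card {u \<in> gadget_V d h. gadget_E d h v u} = card {y. gadget_edge d h x y}"
    using gadget_neighbours[OF \<open>h \<ge> 1\<close>] x(1) by (simp add: card_to_nat_image)
  also have "\<dots> \<le> 2 * d"
    using card_gadget_neighbours_le[OF \<open>d \<ge> 1\<close> x(2)] .
  finally show "card {u \<in> gadget_V d h. gadget_E d h v u} \<le> 2 * d" .
qed

lemma sink_neighbourhood: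
  "h \<ge> 1 \<Longrightarrow> \<forall>y\<in>to_nat ` sink_nodes d. \<forall>u\<in>gadget_V d h.
     gadget_E d h y u \<longleftrightarrow> u \<in> to_nat ` hub_nodes d"
  using hub_nodes_subset_tree_nodes[of h d]
  by (auto simp: gadget_E_def gadget_edge_def gadget_V_def gadget_nodes_def
      sink_nodes_def hub_nodes_def tree_nodes_def)

lemma hub_ids_subset_gadget_V: "h \<ge> 1 \<Longrightarrow> to_nat ` hub_nodes d \<subseteq> gadget_V d h"
  using hub_nodes_subset_tree_nodes[of h d] by (auto simp: gadget_V_def gadget_nodes_def)

lemma walk_to_hub:
  "1 # l # p \<in> tree_nodes d h \<Longrightarrow>
     (to_nat (1 # l # p), to_nat [1, l]) \<in> {(a, b). gadget_E d h a b} ^^ length p"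
proof (induction p rule: rev_induct)
  case Nil
  then show ?case by simp
next
  case (snoc c p)
  then have parent: "1 # l # p \<in> tree_nodes d h"
    by (cases p) (auto simp: tree_nodes_def branch_ok_def)
  with snoc.prems have "(to_nat (1 # l # p @ [c]), to_nat (1 # l # p)) \<in> {(a, b). gadget_E d h a b}"
    by (auto simp: gadget_E_def gadget_edge_def)
  from relpow_Suc_I2[OF this snoc.IH[OF parent]] show ?case
    by simp
qed

lemma leaf_sink_within_dist:
  assumes "h \<ge> 2" and "u \<in> to_nat ` leaf_nodes d h" and "w \<in> to_nat ` sink_nodes d"
  shows "u \<in> gadget_V d h \<and> w \<in> gadget_V d h \<and> u \<noteq> w \<and> within_dist (gadget_E d h) h u w"
proof -
  obtain x y where u: "u = to_nat x" "x \<in> leaf_nodes d h" and w: "w = to_nat y" "y \<in> sink_nodes d"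
    using assms by blast
  then obtain l p where x: "x = 1 # l # p" "length p = h - 1" "l < d"
    using \<open>h \<ge> 2\<close> by (auto simp: leaf_nodes_def)
  have "x \<in> tree_nodes d h"
    using leaf_nodes_subset_tree_nodes[OF \<open>h \<ge> 2\<close>] u(2) by blast
  then have "(u, to_nat [1, l]) \<in> {(a, b). gadget_E d h a b} ^^ (h - 1)"
    using walk_to_hub[of l p d h] u(1) x by simp
  moreover have "gadget_E d h (to_nat [1, l]) w"
    using w \<open>l < d\<close> by (auto simp: gadget_E_def gadget_edge_def hub_nodes_def)
  ultimately have "(u, w) \<in> {(a, b). gadget_E d h a b} ^^ Suc (h - 1)"
    by (auto intro: relpow_Suc_I)
  then have "within_dist (gadget_E d h) h u w"
    using \<open>h \<ge> 2\<close> unfolding within_dist_def by (intro exI[of _ "Suc (h - 1)"]) auto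
  moreover have "x \<noteq> y"
    using u(2) w(2) by (auto simp: leaf_nodes_def sink_nodes_def)
  ultimately show ?thesis
    using \<open>x \<in> tree_nodes d h\<close> u w by (auto simp: gadget_V_def gadget_nodes_def)
qed

lemma card_gadget_V_bounds:
  assumes "d \<ge> 1" and "h \<ge> 2"
  shows "d ^ h \<le> card (gadget_V d h)" and "card (gadget_V d h) \<le> (h + 1) * (2 * d) ^ h"
proof -
  have "card (gadget_V d h) = card (gadget_nodes d h)"
    by (simp add: gadget_V_def card_to_nat_image)
  then have card_V: "card (gadget_V d h) = d + card (tree_nodes d h)"
    using sink_nodes_disjoint_tree_nodes[of d h]
    by (simp add: gadget_nodes_def card_Un_disjoint card_sink_nodes finite_tree_nodes finite_sink_nodes)
  have "d ^ h = d ^ (2 + (h - 2))"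
    using \<open>h \<ge> 2\<close> by (simp only: le_add_diff_inverse)
  also have "\<dots> = d ^ 2 * d ^ (h - 2)"
    by (rule power_add)
  also have "\<dots> \<le> d ^ 2 * (2 * d - 1) ^ (h - 2)"
    by (intro mult_le_mono2 power_mono) auto
  also have "\<dots> = card (leaf_nodes d h)"
    by (simp add: card_leaf_nodes power2_eq_square)
  also have "\<dots> \<le> card (tree_nodes d h)"
    by (intro card_mono finite_tree_nodes leaf_nodes_subset_tree_nodes \<open>h \<ge> 2\<close>)
  finally show "d ^ h \<le> card (gadget_V d h)"
    using card_V by simp
  have "d * (2 * d) ^ (h - 1) \<le> (2 * d) ^ h"
    using \<open>h \<ge> 2\<close> by (simp add: power_eq_if)
  then have "d * (h * (2 * d) ^ (h - 1)) \<le> h * (2 * d) ^ h"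
    by (metis mult.left_commute mult_le_mono2)
  moreover have "d \<le> (2 * d) ^ h"
    using self_le_power[of "2 * d" h] \<open>d \<ge> 1\<close> \<open>h \<ge> 2\<close> by simp
  ultimately have "d + card (tree_nodes d h) \<le> (2 * d) ^ h + h * (2 * d) ^ h"
    using card_tree_nodes_le[of d h] \<open>d \<ge> 1\<close> \<open>h \<ge> 2\<close> by linarith
  then show "card (gadget_V d h) \<le> (h + 1) * (2 * d) ^ h"
    using card_V by simp
qed

lemma gadget_network_size:
  assumes "h \<ge> 2" and "D = 2 * d" and "d \<ge> 1"
  shows "network (gadget_V d h) (gadget_E d h) \<and> max_degree_le (gadget_V d h) (gadget_E d h) D \<and>
    1 / 2 ^ h * real D ^ h \<le> real (card (gadget_V d h)) \<and>
    real (card (gadget_V d h)) \<le> real (h + 1) * real D ^ h"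
proof -
  have "1 / 2 ^ h * real D ^ h = real (d ^ h)"
    using \<open>D = 2 * d\<close> by (simp add: power_mult_distrib)
  moreover have "real (h + 1) * real D ^ h = real ((h + 1) * (2 * d) ^ h)"
    using \<open>D = 2 * d\<close> by (simp only: of_nat_mult of_nat_power)
  ultimately show ?thesis
    using network_gadget max_degree_gadget card_gadget_V_bounds assms
    by (simp only: of_nat_le_iff)
qed

section \<open>Lower bounds for simulation and local broadcast\<close>

lemma simulation_hard_messages:
  fixes A :: "(nat \<Rightarrow> bool list, nat \<Rightarrow> bool list) beep_alg" and d h :: nat
  defines "P \<equiv> to_nat ` leaf_nodes d h \<times> to_nat ` sink_nodes d"
  assumes "h \<ge> 2" and "real T \<le> K / 2" and "K \<le> real (B * card P)"
  shows "\<exists>m. (\<forall>(u, w)\<in>P. length (m u w) \<le> B) \<and>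
    success_prob A (gadget_V d h) (gadget_E d h) (sim_input P m) T (sim_correct P m) \<le> 2 powr (- (K / 2))"
proof -
  let ?M = "PiE P (\<lambda>_. {xs :: bool list. length xs = B})"
  have sink_not_source: "(y, w) \<notin> P" if "y \<in> to_nat ` sink_nodes d" for y w
    using leaf_sink_within_dist[OF \<open>h \<ge> 2\<close> _ that] by (auto simp: P_def)
  have "\<exists>g\<in>?M. success_prob A (gadget_V d h) (gadget_E d h) (sim_input P (curry g)) T
      (sim_correct P (curry g)) \<le> 2 powr (- (K / 2))"
  proof (rule exists_hard_bit_strings[where Y = "to_nat ` sink_nodes d" and S = "to_nat ` hub_nodes d"])
    show "\<forall>g g'. \<forall>y\<in>to_nat ` sink_nodes d. sim_input P (curry g) y = sim_input P (curry g') y"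
      by (simp add: sim_input_def sink_not_source)
    show "\<forall>g\<in>?M. \<forall>g'\<in>?M. \<forall>out out'. sim_correct P (curry g) out \<longrightarrow> sim_correct P (curry g') out' \<longrightarrow>
        (\<forall>y\<in>to_nat ` sink_nodes d. out y = out' y) \<longrightarrow> g = g'"
    proof (intro ballI allI impI)
      fix g g' out out'
      assume g: "g \<in> ?M" and g': "g' \<in> ?M"
        and "sim_correct P (curry g) out" "sim_correct P (curry g') out'"
        and "\<forall>y\<in>to_nat ` sink_nodes d. out y = out' y"
      then have "g (u, w) = g' (u, w)" if "(u, w) \<in> P" for u w
        using that by (force simp: sim_correct_def P_def)
      then show "g = g'"
        using PiE_ext[OF g g'] by auto
    qed
  qed (use assms sink_neighbourhood hub_ids_subset_gadget_V in
       \<open>auto simp: P_def finite_sink_nodes finite_leaf_nodes\<close>)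
  then obtain g where "g \<in> ?M" and "success_prob A (gadget_V d h) (gadget_E d h)
      (sim_input P (curry g)) T (sim_correct P (curry g)) \<le> 2 powr (- (K / 2))"
    by blast
  then show ?thesis
    by (intro exI[of _ "curry g"]) auto
qed

lemma local_broadcast_hard_messages:
  fixes A :: "(bool list, nat \<Rightarrow> bool list) beep_alg" and d h :: nat
  defines "L \<equiv> to_nat ` leaf_nodes d h" and "lb_ok \<equiv> lb_correct (gadget_V d h) (gadget_E d h) h"
  assumes "h \<ge> 2" and "d \<ge> 1" and "real T \<le> K / 2" and "K \<le> real (B * card L)"
  shows "\<exists>m. (\<forall>u\<in>gadget_V d h. length (m u) \<le> B) \<and>
    success_prob A (gadget_V d h) (gadget_E d h) m T (lb_ok m) \<le> 2 powr (- (K / 2))"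
proof -
  let ?M = "PiE L (\<lambda>_. {xs :: bool list. length xs = B})"
  (* g is undefined outside L, of unknown length, hence the padding with [] *)
  define msg where "msg g = (\<lambda>u. if u \<in> L then g u else [])" for g :: "nat \<Rightarrow> bool list"
  have sink_not_leaf: "y \<notin> L" if "y \<in> to_nat ` sink_nodes d" for y
    using leaf_sink_within_dist[OF \<open>h \<ge> 2\<close> _ that] by (auto simp: L_def)
  have "[0, 0] \<in> sink_nodes d"
    using \<open>d \<ge> 1\<close> by (simp add: sink_nodes_def)
  then obtain w where w: "w \<in> to_nat ` sink_nodes d"
    by blast
  have "\<exists>g\<in>?M. success_prob A (gadget_V d h) (gadget_E d h) (msg g) T (lb_ok (msg g))
      \<le> 2 powr (- (K / 2))"
  proof (rule exists_hard_bit_strings[where Y = "to_nat ` sink_nodes d" and S = "to_nat ` hub_nodes d"])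
    show "\<forall>g g'. \<forall>y\<in>to_nat ` sink_nodes d. msg g y = msg g' y"
      by (simp add: msg_def sink_not_leaf)
    show "\<forall>g\<in>?M. \<forall>g'\<in>?M. \<forall>out out'. lb_ok (msg g) out \<longrightarrow> lb_ok (msg g') out' \<longrightarrow>
        (\<forall>y\<in>to_nat ` sink_nodes d. out y = out' y) \<longrightarrow> g = g'"
    proof (intro ballI allI impI)
      fix g g' out out'
      assume g: "g \<in> ?M" and g': "g' \<in> ?M"
        and "lb_ok (msg g) out" "lb_ok (msg g') out'" "\<forall>y\<in>to_nat ` sink_nodes d. out y = out' y"
      (* already the single sink w must output every leaf's message *)
      then have "g u = g' u" if "u \<in> L" for u
        using that w leaf_sink_within_dist[OF \<open>h \<ge> 2\<close> _ w]
        by (force simp: lb_ok_def lb_correct_def msg_def L_def)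
      then show "g = g'"
        using PiE_ext[OF g g'] by auto
    qed
  qed (use assms sink_neighbourhood hub_ids_subset_gadget_V in \<open>auto simp: L_def finite_leaf_nodes\<close>)
  then obtain g where "g \<in> ?M"
    and "success_prob A (gadget_V d h) (gadget_E d h) (msg g) T (lb_ok (msg g)) \<le> 2 powr (- (K / 2))"
    by blast
  then show ?thesis
    by (intro exI[of _ "msg g"]) (auto simp: msg_def)
qed

lemma simulation_lower_bound:
  fixes h B D :: nat
  assumes "h \<ge> 2" and "D \<ge> 2" and "even D"
  shows "let K = real B * real (D - 1) ^ (h - 2) * (real D / 2) ^ 3 in
    \<exists>V E P. network V E \<and> max_degree_le V E D \<and>
      1 / 2 ^ h * real D ^ h \<le> real (card V) \<and> real (card V) \<le> real (h + 1) * real D ^ h \<and>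
      sim_pairs_ok V E h P \<and>
      (\<forall>(A :: (nat \<Rightarrow> bool list, nat \<Rightarrow> bool list) beep_alg) (T :: nat).
         real T \<le> K / 2 \<longrightarrow>
         (\<exists>m. (\<forall>(u, w)\<in>P. length (m u w) \<le> B) \<and>
              success_prob A V E (sim_input P m) T (sim_correct P m) \<le> 2 powr (- (K / 2))))"
proof -
  obtain d where D: "D = 2 * d" and "d \<ge> 1"
    using \<open>even D\<close> \<open>D \<ge> 2\<close> by auto
  define K where "K = real B * real (D - 1) ^ (h - 2) * (real D / 2) ^ 3"
  define P where "P = to_nat ` leaf_nodes d h \<times> to_nat ` sink_nodes d"
  have "card P = d * d * (2 * d - 1) ^ (h - 2) * d"
    by (simp add: P_def card_cartesian_product card_to_nat_image card_leaf_nodes card_sink_nodes)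
  then have "K = real (B * card P)"
    by (simp add: K_def D power3_eq_cube)
  then have hard: "\<forall>(A :: (nat \<Rightarrow> bool list, nat \<Rightarrow> bool list) beep_alg) T. real T \<le> K / 2 \<longrightarrow>
      (\<exists>m. (\<forall>(u, w)\<in>P. length (m u w) \<le> B) \<and> success_prob A (gadget_V d h) (gadget_E d h)
         (sim_input P m) T (sim_correct P m) \<le> 2 powr (- (K / 2)))"
    unfolding P_def by (intro allI impI simulation_hard_messages[OF \<open>h \<ge> 2\<close>]) simp_all
  have "sim_pairs_ok (gadget_V d h) (gadget_E d h) h P"
    using leaf_sink_within_dist[OF \<open>h \<ge> 2\<close>] by (auto simp: sim_pairs_ok_def P_def)
  then show ?thesis
    using gadget_network_size[OF \<open>h \<ge> 2\<close> D \<open>d \<ge> 1\<close>] hard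
    unfolding Let_def K_def[symmetric]
    by (intro exI[of _ "gadget_V d h"] exI[of _ "gadget_E d h"] exI[of _ P]) simp
qed

lemma local_broadcast_lower_bound:
  fixes h B D :: nat
  assumes "h \<ge> 2" and "D \<ge> 2" and "even D"
  shows "let K = real B * real (D - 1) ^ (h - 2) * (real D / 2) ^ 2 in
    \<exists>V E. network V E \<and> max_degree_le V E D \<and>
      1 / 2 ^ h * real D ^ h \<le> real (card V) \<and> real (card V) \<le> real (h + 1) * real D ^ h \<and>
      (\<forall>(A :: (bool list, nat \<Rightarrow> bool list) beep_alg) (T :: nat).
         real T \<le> K / 2 \<longrightarrow>
         (\<exists>m. (\<forall>u\<in>V. length (m u) \<le> B) \<and>
              success_prob A V E m T (lb_correct V E h m) \<le> 2 powr (- (K / 2))))"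
proof -
  obtain d where D: "D = 2 * d" and "d \<ge> 1"
    using \<open>even D\<close> \<open>D \<ge> 2\<close> by auto
  define K where "K = real B * real (D - 1) ^ (h - 2) * (real D / 2) ^ 2"
  have "K = real (B * card (to_nat ` leaf_nodes d h))"
    by (simp add: K_def D card_to_nat_image card_leaf_nodes power2_eq_square)
  then have hard: "\<forall>(A :: (bool list, nat \<Rightarrow> bool list) beep_alg) T. real T \<le> K / 2 \<longrightarrow>
      (\<exists>m. (\<forall>u\<in>gadget_V d h. length (m u) \<le> B) \<and> success_prob A (gadget_V d h) (gadget_E d h)
         m T (lb_correct (gadget_V d h) (gadget_E d h) h m) \<le> 2 powr (- (K / 2)))"
    by (intro allI impI local_broadcast_hard_messages[OF \<open>h \<ge> 2\<close> \<open>d \<ge> 1\<close>]) simp_all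
  show ?thesis
    using gadget_network_size[OF \<open>h \<ge> 2\<close> D \<open>d \<ge> 1\<close>] hard
    unfolding Let_def K_def[symmetric]
    by (intro exI[of _ "gadget_V d h"] exI[of _ "gadget_E d h"]) simp
qed

theorem theorem7:
  fixes h :: nat
  assumes "h \<ge> 2"
  shows
    "(\<exists>c1 c2 :: real. c1 > 0 \<and> c2 > 0 \<and>
       (\<forall>B D :: nat. B \<ge> 1 \<longrightarrow> D \<ge> 2 \<longrightarrow> even D \<longrightarrow>
         (let K = real B * real (D - 1) ^ (h - 2) * (real D / 2) ^ 3 in
          \<exists>V E P. network V E \<and> max_degree_le V E D \<and>
            c1 * real D ^ h \<le> real (card V) \<and> real (card V) \<le> c2 * real D ^ h \<and>
            sim_pairs_ok V E h P \<and>
            (\<forall>(A :: (nat \<Rightarrow> bool list, nat \<Rightarrow> bool list) beep_alg) (T :: nat).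
               real T \<le> K / 2 \<longrightarrow>
               (\<exists>m. (\<forall>(u, w)\<in>P. length (m u w) \<le> B) \<and>
                    success_prob A V E (sim_input P m) T (sim_correct P m)
                      \<le> 2 powr (- (K / 2)))))))
   \<and>
    (\<exists>c1 c2 :: real. c1 > 0 \<and> c2 > 0 \<and>
       (\<forall>B D :: nat. B \<ge> 1 \<longrightarrow> D \<ge> 2 \<longrightarrow> even D \<longrightarrow>
         (let K = real B * real (D - 1) ^ (h - 2) * (real D / 2) ^ 2 in
          \<exists>V E. network V E \<and> max_degree_le V E D \<and>
            c1 * real D ^ h \<le> real (card V) \<and> real (card V) \<le> c2 * real D ^ h \<and>
            (\<forall>(A :: (bool list, nat \<Rightarrow> bool list) beep_alg) (T :: nat).
               real T \<le> K / 2 \<longrightarrow>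
               (\<exists>m. (\<forall>u\<in>V. length (m u) \<le> B) \<and>
                    success_prob A V E m T (lb_correct V E h m)
                      \<le> 2 powr (- (K / 2)))))))"
proof -
  have "(1 / 2 ^ h :: real) > 0" and "real (h + 1) > 0"
    by auto
  then show ?thesis
    using simulation_lower_bound[OF assms] local_broadcast_lower_bound[OF assms] by blast
qed

end
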